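(* Let $k$ be algebraically closed of characteristic $0$ and $n,m\ge0$. Let $\mathfrak M_{n,m}$ be the set of $n\times m$ matrices over $\mathbf F$, and consider $k[\mathfrak M_{n,m}]$ (the vector space with basis $[X]$, $X\in\mathfrak M_{n,m}$) with the left $k[\mathfrak M_n]$-action $[a][X]=[aX]$ and the commuting right $k[\mathfrak M_m]$-action $[X][b]=[Xb]$. Then the images of $k[\mathfrak M_n]$ and of $k[\mathfrak M_m]$ in $\operatorname{End}_k(k[\mathfrak M_{n,m}])$ are each other's centralizers.
   Context: $\mathbf F$ is a finite field with $q$ elements and $\mathfrak M_n$ denotes the monoid of $n\times n$ matrices over $\mathbf F$ with monoid algebra $k[\mathfrak M_n]$. Note $k[\mathfrak M_{n,m}]\cong V^{\otimes m}$ for $V=k[\mathbf F^n]$. *)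

theory Defs
  imports "HOL-Computational_Algebra.Polynomial"
begin

definition alg_closed :: "'k::field itself \<Rightarrow> bool" where
  "alg_closed _ \<longleftrightarrow> (\<forall>p::'k poly. degree p \<ge> 1 \<longrightarrow> (\<exists>x. poly p x = 0))"

type_synonym 'f fmat = "nat \<Rightarrow> nat \<Rightarrow> 'f"

definition mats :: "nat \<Rightarrow> nat \<Rightarrow> ('f::zero) fmat set" where
  "mats n m = {A. \<forall>i j. (i \<ge> n \<or> j \<ge> m) \<longrightarrow> A i j = 0}"

definition mmul :: "nat \<Rightarrow> ('f::comm_semiring_0) fmat \<Rightarrow> 'f fmat \<Rightarrow> 'f fmat" where
  "mmul l A B = (\<lambda>i j. \<Sum>t<l. A i t * B t j)"

(* k-endomorphisms of k[M_{n,m}], represented by their matrices w.r.t. the basis [X], X in M_{n,m}: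
   E Y X is the coefficient of [Y] in E [X]. *)
definition endos :: "nat \<Rightarrow> nat \<Rightarrow> ('f::field fmat \<Rightarrow> 'f fmat \<Rightarrow> 'k::field) set" where
  "endos n m = {E. \<forall>Y X. (Y \<notin> mats n m \<or> X \<notin> mats n m) \<longrightarrow> E Y X = 0}"

definition ecomp :: "nat \<Rightarrow> nat \<Rightarrow> ('f::field fmat \<Rightarrow> 'f fmat \<Rightarrow> 'k::field)
    \<Rightarrow> ('f fmat \<Rightarrow> 'f fmat \<Rightarrow> 'k) \<Rightarrow> ('f fmat \<Rightarrow> 'f fmat \<Rightarrow> 'k)" where
  "ecomp n m E G = (\<lambda>Y X. \<Sum>Z\<in>mats n m. E Y Z * G Z X)"

definition lact :: "nat \<Rightarrow> nat \<Rightarrow> 'f::field fmat \<Rightarrow> ('f fmat \<Rightarrow> 'f fmat \<Rightarrow> 'k::field)" where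
  "lact n m a = (\<lambda>Y X. if X \<in> mats n m \<and> Y \<in> mats n m \<and> mmul n a X = Y then 1 else 0)"

definition ract :: "nat \<Rightarrow> nat \<Rightarrow> 'f::field fmat \<Rightarrow> ('f fmat \<Rightarrow> 'f fmat \<Rightarrow> 'k::field)" where
  "ract n m b = (\<lambda>Y X. if X \<in> mats n m \<and> Y \<in> mats n m \<and> mmul m X b = Y then 1 else 0)"

definition left_image :: "nat \<Rightarrow> nat \<Rightarrow> ('f::field fmat \<Rightarrow> 'f fmat \<Rightarrow> 'k::field) set" where
  "left_image n m = {(\<lambda>Y X. \<Sum>a\<in>mats n n. c a * lact n m a Y X) | c. True}"

definition right_image :: "nat \<Rightarrow> nat \<Rightarrow> ('f::field fmat \<Rightarrow> 'f fmat \<Rightarrow> 'k::field) set" where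
  "right_image n m = {(\<lambda>Y X. \<Sum>b\<in>mats m m. c b * ract n m b Y X) | c. True}"

definition centralizer :: "nat \<Rightarrow> nat \<Rightarrow> ('f::field fmat \<Rightarrow> 'f fmat \<Rightarrow> 'k::field) set
    \<Rightarrow> ('f fmat \<Rightarrow> 'f fmat \<Rightarrow> 'k) set" where
  "centralizer n m S = {E \<in> endos n m. \<forall>G\<in>S. ecomp n m E G = ecomp n m G E}"

end

theory Submission
  imports Defs "HOL-Library.Function_Algebras" "HOL-Library.FuncSet" "HOL-Number_Theory.Cong"
begin

text \<open>Only the inclusions of the centralizers in the images need work, and transposition
  \<open>X \<mapsto> X\<^sup>T\<close>, which exchanges the two actions, reduces them to one: an endomorphism \<open>E\<close>
  commuting with the left action of \<open>M\<^sub>n\<close> is a combination of right multiplications.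
  Since \<open>k\<close> contains the \<open>p\<close>-th roots of unity, \<open>F\<close> has a nontrivial additive character \<open>\<psi>\<close>
  with values in \<open>k\<close>; consider the transform \<open>T(X, B) = \<Sum>\<^sub>Y E(Y, X) \<psi> (tr (B Y))\<close>.
  Equivariance gives \<open>T(a X, B) = T(X, B a)\<close> and forces \<open>E(Y, X) = 0\<close> unless every linear
  relation between the rows of \<open>X\<close> holds for \<open>Y\<close>; together with von Neumann regularity of
  matrices (\<open>B G B = B\<close>) this shows that \<open>T(X, B)\<close> depends only on \<open>B X\<close>. Writing this
  function of \<open>B X \<in> M\<^sub>m\<close> as \<open>\<Sum>\<^sub>c b(c) \<psi> (tr (B X c))\<close> shows that \<open>E\<close> and \<open>\<Sum>\<^sub>c b(c) [- \<cdot> c]\<close>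
  have the same transform, and the transform is injective because \<open>char k = 0\<close>.\<close>

section \<open>Additive characters of a finite field\<close>

lemma prime_CHAR_finite_field: "prime CHAR('f::{finite,field})"
  by (simp add: finite_imp_CHAR_pos prime_CHAR_semidom)

lemma of_nat_inverse_CHAR:
  assumes "(of_nat j :: 'f::{finite,field}) \<noteq> 0"
  obtains u where "of_nat u * of_nat j = (1::'f)"
proof -
  have "\<not> CHAR('f) dvd j"
    using assms by (simp add: of_nat_eq_0_iff_char_dvd)
  then have "coprime j CHAR('f)"
    using prime_imp_coprime[OF prime_CHAR_finite_field] coprime_commute by blast
  then obtain u where "[j * u = Suc 0] (mod CHAR('f))"
    using cong_solve_coprime_nat by blast
  then have "of_nat (j * u) = (1::'f)"
    by (simp add: of_nat_eq_iff_cong_CHAR[symmetric])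
  then show thesis
    using that by (simp add: mult.commute)
qed

definition add_submonoid :: "'a::monoid_add set \<Rightarrow> bool" where
  "add_submonoid H \<longleftrightarrow> 0 \<in> H \<and> (\<forall>a\<in>H. \<forall>b\<in>H. a + b \<in> H)"

lemma add_submonoid_of_nat_mult:
  "add_submonoid H \<Longrightarrow> h \<in> H \<Longrightarrow> of_nat k * (h :: 'a::semiring_1) \<in> H"
  by (induction k) (auto simp: add_submonoid_def distrib_right)

text \<open>In characteristic \<open>p\<close> negation is multiplication by \<open>p - 1\<close>.\<close>

lemma add_submonoid_uminus:
  fixes H :: "'f::{finite,field} set"
  assumes "add_submonoid H" "h \<in> H"
  shows "- h \<in> H"
proof -
  obtain k where k: "CHAR('f) = Suc k"
    using finite_imp_CHAR_pos[where 'a='f] by (auto simp: gr0_conv_Suc)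
  have "of_nat (Suc k) = (0::'f)"
    unfolding k[symmetric] by (rule of_nat_CHAR)
  moreover have "of_nat k * h + h = of_nat (Suc k) * h"
    by (simp add: algebra_simps)
  ultimately have "of_nat k * h + h = 0"
    by simp
  then have "of_nat k * h = - h"
    by (simp add: add_eq_0_iff2)
  then show ?thesis
    using add_submonoid_of_nat_mult[OF assms, of k] by simp
qed

lemma add_submonoid_diff:
  fixes H :: "'f::{finite,field} set"
  assumes "add_submonoid H" "a \<in> H" "b \<in> H"
  shows "a - b \<in> H"
  using add_submonoid_uminus[OF assms(1,3)] assms(1,2)
  unfolding add_submonoid_def diff_conv_add_uminus by blast

lemma of_nat_in_add_submonoid_eq_0:
  fixes H :: "'f::{finite,field} set"
  assumes "add_submonoid H" "1 \<notin> H" "of_nat k \<in> H"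
  shows "(of_nat k :: 'f) = 0"
proof (rule ccontr)
  assume "(of_nat k :: 'f) \<noteq> 0"
  then obtain u where "of_nat u * of_nat k = (1::'f)"
    by (rule of_nat_inverse_CHAR)
  with add_submonoid_of_nat_mult[OF assms(1,3)] assms(2) show False
    by metis
qed

lemma add_submonoid_add_multiples:
  assumes "add_submonoid H"
  shows "add_submonoid {h + of_nat j * x | h j. h \<in> (H :: 'a::semiring_1 set)}"
  unfolding add_submonoid_def
proof (intro conjI ballI)
  have "0 = 0 + of_nat 0 * x" "0 \<in> H"
    using assms by (simp_all add: add_submonoid_def)
  then show "0 \<in> {h + of_nat j * x | h j. h \<in> H}"
    by blast
next
  fix a b
  assume "a \<in> {h + of_nat j * x | h j. h \<in> H}" "b \<in> {h + of_nat j * x | h j. h \<in> H}"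
  then obtain h1 j1 h2 j2 where "a = h1 + of_nat j1 * x" "b = h2 + of_nat j2 * x" "h1 \<in> H" "h2 \<in> H"
    by auto
  then show "a + b \<in> {h + of_nat j * x | h j. h \<in> H}"
    using assms unfolding add_submonoid_def
    by (intro CollectI exI[of _ "h1 + h2"] exI[of _ "j1 + j2"]) (auto simp: algebra_simps)
qed

lemma maximal_add_submonoid_coset:
  fixes H :: "'f::{finite,field} set"
  assumes H: "add_submonoid H" "1 \<notin> H"
    and maximal: "\<And>H'. add_submonoid H' \<Longrightarrow> 1 \<notin> H' \<Longrightarrow> H \<subseteq> H' \<Longrightarrow> H' = H"
  shows "\<exists>i. x - of_nat i \<in> H"
proof (cases "x \<in> H")
  case True
  then show ?thesis
    by (intro exI[of _ 0]) simp
next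
  case False
  define H' where "H' = {h + of_nat j * x | h j. h \<in> H}"
  have "H \<subseteq> H'"
    unfolding H'_def by (force intro: exI[of _ 0])
  moreover have "x \<in> H'"
  proof -
    have "x = 0 + of_nat 1 * x" "(0::'f) \<in> H"
      using H(1) by (simp_all add: add_submonoid_def)
    then show ?thesis
      unfolding H'_def by blast
  qed
  ultimately have "1 \<in> H'"
    using maximal[OF add_submonoid_add_multiples[OF H(1)]] False unfolding H'_def by blast
  then obtain h j where hj: "1 = h + of_nat j * x" "h \<in> H"
    unfolding H'_def by auto
  then have "(of_nat j :: 'f) \<noteq> 0"
    using H(2) by auto
  then obtain u where u: "of_nat u * of_nat j = (1::'f)"
    by (rule of_nat_inverse_CHAR)
  have "x = of_nat u * (1 - h)"
    using u hj(1) by (metis add_diff_cancel_left' mult.assoc mult_1)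
  then have "x - of_nat u = - (of_nat u * h)"
    by (simp add: algebra_simps)
  then show ?thesis
    using add_submonoid_uminus[OF H(1) add_submonoid_of_nat_mult[OF H(1) hj(2)]] by metis
qed

lemma add_submonoid_coset_cong:
  fixes H :: "'f::{finite,field} set"
  assumes H: "add_submonoid H" "1 \<notin> H" and "x - of_nat i \<in> H" "x - of_nat j \<in> H"
  shows "[i = j] (mod CHAR('f))"
proof -
  have "of_nat i = (of_nat j :: 'f)" if "i \<le> j" "x - of_nat i \<in> H" "x - of_nat j \<in> H" for i j
    using of_nat_in_add_submonoid_eq_0[OF H, of "j - i"]
      add_submonoid_diff[OF H(1) that(2,3)] that(1) by (simp add: of_nat_diff)
  then have "of_nat i = (of_nat j :: 'f)"
    using assms(3,4) nat_le_linear[of i j] by metis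
  then show ?thesis
    by (simp add: of_nat_eq_iff_cong_CHAR)
qed

lemma power_cong_root_of_unity:
  fixes z :: "'a::monoid_mult"
  assumes "z ^ p = 1" "[i = j] (mod p)"
  shows "z ^ i = z ^ j"
proof -
  have "z ^ i = z ^ (i mod p)" for i
  proof -
    have "z ^ i = (z ^ p) ^ (i div p) * z ^ (i mod p)"
      by (simp add: power_add[symmetric] power_mult[symmetric])
    then show ?thesis
      using assms(1) by simp
  qed
  then show ?thesis
    using assms(2) unfolding cong_def by metis
qed

lemma ex_nontrivial_root_of_unity:
  assumes "alg_closed TYPE('k::field_char_0)" "p \<ge> 2"
  shows "\<exists>z::'k. z ^ p = 1 \<and> z \<noteq> 1"
proof -
  define Q :: "'k poly" where "Q = (\<Sum>i<p. monom 1 i)"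
  have "coeff Q 1 = 1"
    using assms(2) by (simp add: Q_def coeff_sum coeff_monom)
  then have "degree Q \<ge> 1"
    by (intro le_degree) simp
  then obtain z where z: "poly Q z = 0"
    using assms(1) unfolding alg_closed_def by blast
  have Qz: "poly Q z = (\<Sum>i<p. z ^ i)"
    by (simp add: Q_def poly_sum poly_monom)
  have "z \<noteq> 1"
    using z Qz assms(2) by auto
  moreover have "z ^ p = 1"
    using z Qz sum_gp_strict[of z p] \<open>z \<noteq> 1\<close> by simp
  ultimately show ?thesis
    by blast
qed

locale additive_character =
  fixes \<psi> :: "'f::{finite,field} \<Rightarrow> 'k::field_char_0"
  assumes hom_add: "\<psi> (x + y) = \<psi> x * \<psi> y"
    and hom_zero: "\<psi> 0 = 1"
    and nontrivial: "\<exists>t. \<psi> t \<noteq> 1"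

text \<open>A maximal additive subgroup \<open>H\<close> avoiding \<open>1\<close> has index \<open>p\<close>, with coset representatives
  \<open>0, 1, \<dots>, p - 1\<close>; composing \<open>F \<rightarrow> F/H \<cong> \<int>/p\<close> with \<open>i \<mapsto> z\<^sup>i\<close> gives the character.\<close>

lemma additive_character_of_maximal_add_submonoid:
  fixes H :: "'f::{finite,field} set" and z :: "'k::field_char_0"
  assumes H: "add_submonoid H" "1 \<notin> H"
    and maximal: "\<And>H'. add_submonoid H' \<Longrightarrow> 1 \<notin> H' \<Longrightarrow> H \<subseteq> H' \<Longrightarrow> H' = H"
    and z: "z ^ CHAR('f) = 1" "z \<noteq> 1"
  shows "additive_character (\<lambda>x. z ^ (SOME i. x - of_nat i \<in> H))"
proof -
  define \<psi> where "\<psi> x = z ^ (SOME i. x - of_nat i \<in> H)" for x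
  have \<psi>_eq: "\<psi> x = z ^ i" if "x - of_nat i \<in> H" for x i
  proof -
    have "x - of_nat (SOME i. x - of_nat i \<in> H) \<in> H"
      using that by (rule someI)
    then have "[i = (SOME i. x - of_nat i \<in> H)] (mod CHAR('f))"
      using add_submonoid_coset_cong[OF H that] by blast
    then show ?thesis
      unfolding \<psi>_def using z(1) by (rule power_cong_root_of_unity[rotated, symmetric])
  qed
  have "\<psi> (x + y) = \<psi> x * \<psi> y" for x y
  proof -
    obtain i j where ij: "x - of_nat i \<in> H" "y - of_nat j \<in> H"
      using maximal_add_submonoid_coset[OF H maximal] by metis
    then have "(x + y) - of_nat (i + j) \<in> H"
      using H(1) unfolding add_submonoid_def by (metis add_diff_add of_nat_add)
    then have "\<psi> (x + y) = z ^ (i + j)"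
      by (rule \<psi>_eq)
    then show ?thesis
      using \<psi>_eq[OF ij(1)] \<psi>_eq[OF ij(2)] by (simp add: power_add)
  qed
  moreover have "\<psi> 0 = 1" "\<psi> 1 \<noteq> 1"
    using \<psi>_eq[of 0 0] \<psi>_eq[of 1 1] H z(2) by (auto simp: add_submonoid_def)
  ultimately show ?thesis
    unfolding \<psi>_def[symmetric] by unfold_locales blast+
qed

lemma ex_additive_character:
  assumes "alg_closed TYPE('k::field_char_0)"
  shows "\<exists>\<psi> :: 'f::{finite,field} \<Rightarrow> 'k. additive_character \<psi>"
proof -
  obtain z :: 'k where z: "z ^ CHAR('f) = 1" "z \<noteq> 1"
    using ex_nontrivial_root_of_unity[OF assms prime_ge_2_nat[OF prime_CHAR_finite_field]]
    by blast
  let ?S = "{H :: 'f set. add_submonoid H \<and> 1 \<notin> H}"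
  have "finite ?S" "{0} \<in> ?S"
    by (auto simp: add_submonoid_def)
  then obtain H where "H \<in> ?S" and "\<And>H'. H' \<in> ?S \<Longrightarrow> H \<subseteq> H' \<Longrightarrow> H' = H"
    using finite_has_maximal[of ?S] by blast
  then show ?thesis
    using additive_character_of_maximal_add_submonoid[OF _ _ _ z, of H] by blast
qed

section \<open>Matrices\<close>

lemma finite_mats: "finite (mats r c :: 'f::{finite,zero} fmat set)"
proof -
  let ?rows = "{v :: nat \<Rightarrow> 'f. \<forall>j. (j \<in> {..<c} \<longrightarrow> v j \<in> UNIV) \<and> (j \<notin> {..<c} \<longrightarrow> v j = 0)}"
  have "finite ?rows"
    by (rule finite_set_of_finite_funs) auto
  then have "finite {A :: 'f fmat. \<forall>i. (i \<in> {..<r} \<longrightarrow> A i \<in> ?rows) \<and> (i \<notin> {..<r} \<longrightarrow> A i = 0)}"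
    by (intro finite_set_of_finite_funs) auto
  moreover have "mats r c \<subseteq> {A :: 'f fmat. \<forall>i. (i \<in> {..<r} \<longrightarrow> A i \<in> ?rows) \<and> (i \<notin> {..<r} \<longrightarrow> A i = 0)}"
    by (auto simp: mats_def fun_eq_iff)
  ultimately show ?thesis
    by (rule finite_subset[rotated])
qed

lemma zero_in_mats [simp]: "0 \<in> mats r c"
  by (simp add: mats_def)

lemma card_mats_pos: "card (mats r c :: 'f::{finite,zero} fmat set) > 0"
  using finite_mats zero_in_mats card_gt_0_iff by blast

lemma add_in_mats: "A \<in> mats r c \<Longrightarrow> B \<in> mats r c \<Longrightarrow> A + (B :: 'a::monoid_add fmat) \<in> mats r c"
  by (simp add: mats_def)

lemma diff_in_mats: "A \<in> mats r c \<Longrightarrow> B \<in> mats r c \<Longrightarrow> A - (B :: 'a::group_add fmat) \<in> mats r c"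
  by (simp add: mats_def)

lemma mmul_in_mats: "A \<in> mats r l \<Longrightarrow> B \<in> mats l c \<Longrightarrow> mmul l A B \<in> mats r c"
  by (auto simp: mats_def mmul_def)

lemma mmul_assoc: "mmul l2 (mmul l1 A B) C = mmul l1 A (mmul l2 B C)"
  unfolding mmul_def
  by (intro ext) (simp add: sum_distrib_left sum_distrib_right mult.assoc; rule sum.swap)

lemma mmul_add_left: "mmul l (A + B) C = mmul l A C + mmul l B (C :: 'a::comm_semiring_0 fmat)"
  by (simp add: mmul_def fun_eq_iff distrib_right sum.distrib)

lemma mmul_diff_left: "mmul l (A - B) C = mmul l A C - mmul l B (C :: 'a::comm_ring fmat)"
  by (simp add: mmul_def fun_eq_iff left_diff_distrib sum_subtractf)

lemma mmul_diff_right: "mmul l A (B - C) = mmul l A B - mmul l A (C :: 'a::comm_ring fmat)"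
  by (simp add: mmul_def fun_eq_iff right_diff_distrib sum_subtractf)

lemma mmul_zero_left [simp]: "mmul l 0 B = (0 :: 'a::comm_semiring_0 fmat)"
  by (simp add: mmul_def fun_eq_iff)

lemma mmul_zero_right [simp]: "mmul l A 0 = (0 :: 'a::comm_semiring_0 fmat)"
  by (simp add: mmul_def fun_eq_iff)

definition mat_id :: "nat \<Rightarrow> 'a::{zero,one} fmat" where
  "mat_id n = (\<lambda>i j. if i = j \<and> i < n then 1 else 0)"

lemma mat_id_in_mats: "mat_id n \<in> mats n n"
  by (simp add: mats_def mat_id_def)

lemma mmul_mat_id_left:
  assumes "B \<in> mats n c"
  shows "mmul n (mat_id n) B = (B :: 'a::comm_semiring_1 fmat)"
proof (intro ext)
  fix i j
  have "mmul n (mat_id n) B i j = (\<Sum>t<n. if t = i then B t j else 0)"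
    unfolding mmul_def mat_id_def by (intro sum.cong) auto
  then show "mmul n (mat_id n) B i j = B i j"
    using assms by (simp add: mats_def)
qed

lemma mmul_mat_id_right:
  assumes "A \<in> mats r n"
  shows "mmul n A (mat_id n) = (A :: 'a::comm_semiring_1 fmat)"
proof (intro ext)
  fix i j
  have "mmul n A (mat_id n) i j = (\<Sum>t<n. if t = j then A i t else 0)"
    unfolding mmul_def mat_id_def by (intro sum.cong) auto
  then show "mmul n A (mat_id n) i j = A i j"
    using assms by (simp add: mats_def)
qed

definition mtrace :: "nat \<Rightarrow> 'a::comm_monoid_add fmat \<Rightarrow> 'a" where
  "mtrace n A = (\<Sum>i<n. A i i)"

lemma mtrace_add: "mtrace n (A + B) = mtrace n A + mtrace n B"
  by (simp add: mtrace_def sum.distrib)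

lemma mtrace_diff: "mtrace n (A - B) = mtrace n A - mtrace n (B :: 'a::ab_group_add fmat)"
  by (simp add: mtrace_def sum_subtractf)

lemma mtrace_mmul_commute: "mtrace l (mmul r B Z) = mtrace r (mmul l Z (B :: 'a::comm_semiring_0 fmat))"
  unfolding mtrace_def mmul_def by (subst sum.swap) (simp add: mult.commute)

definition mrows :: "nat \<Rightarrow> 'a::zero fmat \<Rightarrow> 'a fmat" where
  "mrows r B = (\<lambda>i j. if i < r then B i j else 0)"

lemma mrows_in_mats: "B \<in> mats s c \<Longrightarrow> mrows r B \<in> mats r c"
  by (simp add: mats_def mrows_def)

lemma generalized_inverse_mrows_apply:
  assumes "mmul r (mmul c (mrows r B) G) (mrows r B) = mrows r B" "i < r"
  shows "mmul r (mmul c B G) (mrows r B) i j = B i j"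
proof -
  have "mmul r (mmul c B G) (mrows r B) i j = mmul r (mmul c (mrows r B) G) (mrows r B) i j"
    using assms(2) by (simp add: mmul_def mrows_def)
  then show ?thesis
    using assms by (simp add: mrows_def)
qed

text \<open>Adding a row \<open>\<rho>\<close> to a matrix \<open>B'\<close> with generalized inverse \<open>G'\<close>: the rank-one update
  \<open>G = G' + v (e\<^sub>r - \<rho> G')\<close> satisfies \<open>B G B = B + (B v - e\<^sub>r) \<beta>\<close> with \<open>\<beta> = \<rho> - \<rho> G' B'\<close>,
  which vanishes if \<open>\<beta> = 0\<close> or if \<open>B' v = 0\<close> and \<open>\<rho> v = 1\<close>.\<close>

lemma generalized_inverse_rank_one_update:
  fixes B G' :: "'a::field fmat" and r c :: nat
  defines "B' \<equiv> mrows r B"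
  defines "\<beta> \<equiv> \<lambda>j. B r j - mmul r (mmul c B G') B' r j"
  assumes B: "B \<in> mats (Suc r) c" and G': "G' \<in> mats c r" "mmul r (mmul c B' G') B' = B'"
    and v: "\<And>u. c \<le> u \<Longrightarrow> v u = 0" "\<And>i. i < r \<Longrightarrow> (\<Sum>u<c. B i u * v u) = 0"
      "\<And>j. (1 - (\<Sum>u<c. B r u * v u)) * \<beta> j = 0"
  shows "\<exists>G\<in>mats c (Suc r). mmul (Suc r) (mmul c B G) B = B"
proof -
  define K where "K = mmul c B G'"
  define Bv where "Bv i = (\<Sum>u<c. B i u * v u)" for i
  define G where "G u t = (if t < r then G' u t - v u * K r t else if t = r then v u else 0)" for u t
  have G_mats: "G \<in> mats c (Suc r)"
    using G'(1) v(1) by (auto simp: mats_def G_def)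
  have BG: "mmul c B G i t = (if t < r then K i t - Bv i * K r t else if t = r then Bv i else 0)" for i t
    by (simp add: mmul_def G_def K_def Bv_def right_diff_distrib sum_subtractf sum_distrib_right
        mult.assoc)
  have BGB: "mmul (Suc r) (mmul c B G) B i j = mmul r K B' i j + Bv i * \<beta> j" for i j
  proof -
    have "mmul (Suc r) (mmul c B G) B i j = (\<Sum>t<r. (K i t - Bv i * K r t) * B' t j) + Bv i * B r j"
      by (simp add: mmul_def[of "Suc r"] BG B'_def mrows_def)
    also have "\<dots> = mmul r K B' i j - Bv i * mmul r K B' r j + Bv i * B r j"
      by (simp add: mmul_def left_diff_distrib sum_subtractf sum_distrib_left mult.assoc)
    finally show ?thesis
      by (simp add: \<beta>_def K_def algebra_simps)
  qed
  have "mmul (Suc r) (mmul c B G) B i j = B i j" for i j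
  proof -
    consider "i < r" | "i = r" | "i > r"
      by linarith
    then show ?thesis
    proof cases
      case 1
      then show ?thesis
        using BGB generalized_inverse_mrows_apply[OF G'(2)[unfolded B'_def]] v(2)
        by (simp add: Bv_def K_def B'_def)
    next
      case 2
      have "mmul (Suc r) (mmul c B G) B r j = B r j - (1 - Bv r) * \<beta> j"
        unfolding BGB by (simp add: \<beta>_def K_def algebra_simps)
      then show ?thesis
        using v(3)[of j] 2 by (simp add: Bv_def)
    next
      case 3
      then have "B i t = 0" for t
        using B by (simp add: mats_def)
      then show ?thesis
        by (simp add: mmul_def)
    qed
  qed
  then show ?thesis
    using G_mats by blast
qed

lemma ex_generalized_inverse_update_vector:
  fixes B G' :: "'a::field fmat" and r c :: nat
  defines "B' \<equiv> mrows r B"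
  defines "\<beta> \<equiv> \<lambda>j. B r j - mmul r (mmul c B G') B' r j"
  assumes B: "B \<in> mats (Suc r) c" and G': "G' \<in> mats c r" "mmul r (mmul c B' G') B' = B'"
  shows "\<exists>v. (\<forall>u. c \<le> u \<longrightarrow> v u = 0) \<and> (\<forall>i<r. (\<Sum>u<c. B i u * v u) = 0) \<and>
    (\<forall>j. (1 - (\<Sum>u<c. B r u * v u)) * \<beta> j = 0)"
proof (cases "\<forall>j. \<beta> j = 0")
  case True
  then show ?thesis
    by (intro exI[of _ "\<lambda>_. 0"]) simp
next
  case False
  then obtain j0 where j0: "\<beta> j0 \<noteq> 0"
    by blast
  have "j0 < c"
  proof (rule ccontr)
    assume "\<not> j0 < c"
    then have "B t j0 = 0" "B' t j0 = 0" for t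
      using B by (simp_all add: mats_def B'_def mrows_def)
    then show False
      using j0 by (simp add: \<beta>_def mmul_def)
  qed
  define v where "v u = ((if u = j0 then 1 else 0) - mmul r G' B' u j0) / \<beta> j0" for u
  have Bv: "(\<Sum>u<c. B i u * v u) = (B i j0 - mmul r (mmul c B G') B' i j0) / \<beta> j0" for i
  proof -
    have "(\<Sum>u<c. B i u * v u) =
        ((\<Sum>u<c. if u = j0 then B i u else 0) - mmul c B (mmul r G' B') i j0) / \<beta> j0"
      by (simp add: v_def mmul_def sum_divide_distrib[symmetric] sum_subtractf right_diff_distrib
          if_distrib[of "\<lambda>x. B i _ * x"] cong: if_cong)
    then show ?thesis
      using \<open>j0 < c\<close> by (simp add: mmul_assoc)
  qed
  have "v u = 0" if "c \<le> u" for u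
    using that \<open>j0 < c\<close> G'(1) by (simp add: v_def mmul_def mats_def)
  moreover have "(\<Sum>u<c. B i u * v u) = 0" if "i < r" for i
    using that G'(2) by (simp add: Bv generalized_inverse_mrows_apply B'_def)
  moreover have "(\<Sum>u<c. B r u * v u) = 1"
    using j0 by (simp add: Bv \<beta>_def)
  ultimately show ?thesis
    by auto
qed

lemma ex_generalized_inverse:
  fixes B :: "'a::field fmat"
  assumes "B \<in> mats r c"
  shows "\<exists>G\<in>mats c r. mmul r (mmul c B G) B = B"
  using assms
proof (induction r arbitrary: B)
  case 0
  then have "B = 0"
    by (auto simp: mats_def fun_eq_iff)
  then show ?case
    by (intro bexI[of _ 0]) (simp_all add: mmul_def fun_eq_iff)
next
  case (Suc r)
  obtain G' where G': "G' \<in> mats c r" "mmul r (mmul c (mrows r B) G') (mrows r B) = mrows r B"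
    using Suc.IH[OF mrows_in_mats[OF Suc.prems]] by blast
  obtain v where "\<forall>u. c \<le> u \<longrightarrow> v u = 0" "\<forall>i<r. (\<Sum>u<c. B i u * v u) = 0"
    "\<forall>j. (1 - (\<Sum>u<c. B r u * v u)) * (B r j - mmul r (mmul c B G') (mrows r B) r j) = 0"
    using ex_generalized_inverse_update_vector[OF Suc.prems G'] by auto
  then show ?case
    by (intro generalized_inverse_rank_one_update[where v = v, OF Suc.prems G']) auto
qed

section \<open>Character sums over matrices\<close>

context additive_character
begin

lemma hom_diff: "\<psi> (x - y) = \<psi> x * \<psi> (- y)"
  using hom_add[of x "- y"] by simp

lemma sum_character_trace:
  assumes "Z \<in> mats r l"
  shows "(\<Sum>B\<in>mats l r. \<psi> (mtrace l (mmul r B Z))) =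
    (if Z = 0 then of_nat (card (mats l r :: 'f fmat set)) else 0)"
proof (cases "Z = 0")
  case True
  then show ?thesis
    by (simp add: mtrace_def hom_zero)
next
  case False
  then obtain j0 i0 where Z: "Z j0 i0 \<noteq> 0"
    by (auto simp: fun_eq_iff)
  then have "j0 < r" "i0 < l"
    using assms by (auto simp: mats_def not_less[symmetric])
  obtain t where t: "\<psi> t \<noteq> 1"
    using nontrivial by blast
  define D where "D i j = (if i = i0 then if j = j0 then t / Z j0 i0 else 0 else 0)" for i j
  have D: "D \<in> mats l r"
    using \<open>j0 < r\<close> \<open>i0 < l\<close> by (auto simp: mats_def D_def)
  have "(\<Sum>j<r. D i j * Z j i) = (if i = i0 then t else 0)" for i
    using \<open>j0 < r\<close> Z by (cases "i = i0") (simp_all add: D_def if_distrib[of "\<lambda>x. x * Z _ _"] cong: if_cong)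
  then have "mtrace l (mmul r D Z) = t"
    using \<open>i0 < l\<close> by (simp add: mtrace_def mmul_def)
  then have shift: "\<psi> (mtrace l (mmul r (B + D) Z)) = \<psi> t * \<psi> (mtrace l (mmul r B Z))" for B
    by (simp add: mmul_add_left mtrace_add hom_add mult.commute)
  let ?S = "\<Sum>B\<in>mats l r. \<psi> (mtrace l (mmul r B Z))"
  have "?S = (\<Sum>B\<in>mats l r. \<psi> (mtrace l (mmul r (B + D) Z)))"
    by (rule sum.reindex_bij_witness[of _ "\<lambda>B. B + D" "\<lambda>B. B - D"])
      (auto simp: add_in_mats diff_in_mats D)
  also have "\<dots> = \<psi> t * ?S"
    by (simp add: shift sum_distrib_left)
  finally have "(1 - \<psi> t) * ?S = 0"
    by (simp add: algebra_simps)
  then show ?thesis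
    using t False by simp
qed

lemma fourier_injective:
  assumes "\<And>B. B \<in> mats m n \<Longrightarrow> (\<Sum>Y\<in>mats n m. g Y * \<psi> (mtrace m (mmul n B Y))) = 0"
    and "Y0 \<in> mats n m"
  shows "g Y0 = 0"
proof -
  let ?N = "of_nat (card (mats m n :: 'f fmat set)) :: 'k"
  have "0 = (\<Sum>B\<in>mats m n. \<psi> (- mtrace m (mmul n B Y0)) *
      (\<Sum>Y\<in>mats n m. g Y * \<psi> (mtrace m (mmul n B Y))))"
    using assms(1) by simp
  also have "\<dots> = (\<Sum>B\<in>mats m n. \<Sum>Y\<in>mats n m. g Y * \<psi> (mtrace m (mmul n B (Y - Y0))))"
    by (simp add: sum_distrib_left mmul_diff_right mtrace_diff hom_diff mult_ac)
  also have "\<dots> = (\<Sum>Y\<in>mats n m. g Y * (\<Sum>B\<in>mats m n. \<psi> (mtrace m (mmul n B (Y - Y0)))))"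
    by (subst sum.swap) (simp add: sum_distrib_left)
  also have "\<dots> = (\<Sum>Y\<in>mats n m. if Y = Y0 then g Y * ?N else 0)"
    using assms(2) by (intro sum.cong refl) (simp add: sum_character_trace diff_in_mats)
  also have "\<dots> = g Y0 * ?N"
    using assms(2) by (simp add: finite_mats)
  finally show ?thesis
    using card_mats_pos[where 'f='f, of m n] by simp
qed

lemma fourier_surjective:
  "\<exists>b. \<forall>D\<in>mats l r. (\<Sum>c\<in>mats r l. b c * \<psi> (mtrace l (mmul r D c))) = f D"
proof -
  let ?N = "of_nat (card (mats r l :: 'f fmat set)) :: 'k"
  define b where "b c = (\<Sum>A\<in>mats l r. f A * \<psi> (- mtrace l (mmul r A c))) / ?N" for c
  have pairing: "\<psi> (- mtrace l (mmul r A c)) * \<psi> (mtrace l (mmul r D c)) =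
      \<psi> (mtrace r (mmul l c (D - A)))" for A c D
    by (simp add: mtrace_mmul_commute[of r l, symmetric] mmul_diff_right mtrace_diff hom_diff
        mult.commute)
  have "(\<Sum>c\<in>mats r l. b c * \<psi> (mtrace l (mmul r D c))) = f D" if D: "D \<in> mats l r" for D
  proof -
    have "(\<Sum>c\<in>mats r l. b c * \<psi> (mtrace l (mmul r D c))) =
        (\<Sum>c\<in>mats r l. \<Sum>A\<in>mats l r. f A * \<psi> (mtrace r (mmul l c (D - A)))) / ?N"
      by (simp add: b_def pairing sum_divide_distrib sum_distrib_right mult.assoc)
    also have "\<dots> = (\<Sum>A\<in>mats l r. f A * (\<Sum>c\<in>mats r l. \<psi> (mtrace r (mmul l c (D - A))))) / ?N"
      by (subst sum.swap) (simp add: sum_distrib_left)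
    also have "\<dots> = (\<Sum>A\<in>mats l r. if A = D then f A * ?N else 0) / ?N"
      using D by (intro arg_cong[where f = "\<lambda>x. x / ?N"] sum.cong refl)
        (auto simp: sum_character_trace diff_in_mats)
    also have "\<dots> = f D"
      using D card_mats_pos[where 'f='f, of r l] by (simp add: finite_mats card_gt_0_iff)
    finally show ?thesis .
  qed
  then show ?thesis
    by blast
qed

end

section \<open>Endomorphisms of \<open>k[M\<^sub>n\<^sub>,\<^sub>m]\<close>\<close>

definition basis_endo :: "nat \<Rightarrow> nat \<Rightarrow> ('f::field fmat \<Rightarrow> 'f fmat) \<Rightarrow> ('f fmat \<Rightarrow> 'f fmat \<Rightarrow> 'k::field)" where
  "basis_endo n m \<phi> = (\<lambda>Y X. if X \<in> mats n m \<and> Y \<in> mats n m \<and> \<phi> X = Y then 1 else 0)"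

lemma lact_eq_basis_endo: "lact n m a = basis_endo n m (mmul n a)"
  by (simp add: lact_def basis_endo_def fun_eq_iff)

lemma ract_eq_basis_endo: "ract n m b = basis_endo n m (\<lambda>X. mmul m X b)"
  by (simp add: ract_def basis_endo_def fun_eq_iff)

lemma ecomp_basis_endo_right:
  fixes E :: "'f::{finite,field} fmat \<Rightarrow> 'f fmat \<Rightarrow> 'k::field"
  assumes "\<And>X. X \<in> mats n m \<Longrightarrow> \<phi> X \<in> mats n m"
  shows "ecomp n m E (basis_endo n m \<phi>) Y X = (if X \<in> mats n m then E Y (\<phi> X) else 0)"
proof -
  have "ecomp n m E (basis_endo n m \<phi>) Y X = (\<Sum>Z\<in>mats n m. if X \<in> mats n m \<and> Z = \<phi> X then E Y Z else 0)"
    unfolding ecomp_def basis_endo_def by (intro sum.cong) auto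
  then show ?thesis
    using assms by (simp add: finite_mats)
qed

lemma ecomp_basis_endo_left:
  fixes E :: "'f::{finite,field} fmat \<Rightarrow> 'f fmat \<Rightarrow> 'k::field"
  shows "ecomp n m (basis_endo n m \<phi>) E Y X =
    (if Y \<in> mats n m then (\<Sum>Z\<in>{Z \<in> mats n m. \<phi> Z = Y}. E Z X) else 0)"
  by (simp add: ecomp_def basis_endo_def sum.inter_filter finite_mats if_distrib[of "\<lambda>x. x * _"]
      cong: if_cong)

lemma ecomp_basis_endo:
  assumes "\<And>X. X \<in> mats n m \<Longrightarrow> \<chi> X \<in> mats n m"
  shows "ecomp n m (basis_endo n m \<phi>) (basis_endo n m \<chi>) =
    (basis_endo n m (\<phi> \<circ> \<chi>) :: 'f::{finite,field} fmat \<Rightarrow> 'f fmat \<Rightarrow> 'k::field)"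
  by (intro ext) (simp only: ecomp_basis_endo_right[OF assms], auto simp: basis_endo_def assms)

lemma lact_ract_commute:
  assumes "a \<in> mats n n" "b \<in> mats m m"
  shows "ecomp n m (lact n m a) (ract n m b) =
    (ecomp n m (ract n m b) (lact n m a) :: 'f::{finite,field} fmat \<Rightarrow> 'f fmat \<Rightarrow> 'k::field)"
  unfolding lact_eq_basis_endo ract_eq_basis_endo
  using assms by (simp add: ecomp_basis_endo mmul_in_mats comp_def mmul_assoc)

lemma ecomp_sum_left:
  "ecomp n m (\<lambda>Y X. \<Sum>i\<in>I. c i * G i Y X) E = (\<lambda>Y X. \<Sum>i\<in>I. c i * ecomp n m (G i) E Y X)"
  unfolding ecomp_def
  by (intro ext) (simp add: sum_distrib_left sum_distrib_right mult.assoc; rule sum.swap)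

lemma ecomp_sum_right:
  "ecomp n m E (\<lambda>Y X. \<Sum>i\<in>I. c i * G i Y X) = (\<lambda>Y X. \<Sum>i\<in>I. c i * ecomp n m E (G i) Y X)"
  unfolding ecomp_def
  by (intro ext) (simp add: sum_distrib_left mult.left_commute; rule sum.swap)

lemma left_image_right_image_commute:
  fixes G E :: "'f::{finite,field} fmat \<Rightarrow> 'f fmat \<Rightarrow> 'k::field"
  assumes "G \<in> left_image n m" "E \<in> right_image n m"
  shows "ecomp n m G E = ecomp n m E G"
proof -
  obtain d where G: "G = (\<lambda>Y X. \<Sum>a\<in>mats n n. d a * lact n m a Y X)"
    using assms(1) by (auto simp: left_image_def)
  obtain c where E: "E = (\<lambda>Y X. \<Sum>b\<in>mats m m. c b * ract n m b Y X)"
    using assms(2) by (auto simp: right_image_def)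
  have "ecomp n m G E =
      (\<lambda>Y X. \<Sum>a\<in>mats n n. d a * (\<Sum>b\<in>mats m m. c b * ecomp n m (ract n m b) (lact n m a) Y X))"
    unfolding G E ecomp_sum_left ecomp_sum_right
    by (intro ext sum.cong refl arg_cong2[where f = "(*)"]) (simp_all add: lact_ract_commute)
  also have "\<dots> = ecomp n m E G"
    unfolding G E ecomp_sum_left ecomp_sum_right
    by (intro ext) (simp add: sum_distrib_left mult.left_commute; rule sum.swap)
  finally show ?thesis .
qed

lemma left_image_subset_endos: "left_image n m \<subseteq> endos n m"
  by (auto simp: left_image_def endos_def lact_def)

lemma right_image_subset_endos: "right_image n m \<subseteq> endos n m"
  by (auto simp: right_image_def endos_def ract_def)

lemma subset_centralizerI:
  assumes "T \<subseteq> endos n m" "\<And>E G. E \<in> T \<Longrightarrow> G \<in> S \<Longrightarrow> ecomp n m E G = ecomp n m G E"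
  shows "T \<subseteq> centralizer n m S"
  using assms by (auto simp: centralizer_def)

lemma lact_in_left_image:
  assumes "a \<in> mats n n"
  shows "lact n m a \<in> (left_image n m :: ('f::{finite,field} fmat \<Rightarrow> 'f fmat \<Rightarrow> 'k::field) set)"
proof -
  define c :: "'f fmat \<Rightarrow> 'k" where "c a' = (if a' = a then 1 else 0)" for a'
  have "lact n m a = (\<lambda>Y X. \<Sum>a'\<in>mats n n. c a' * lact n m a' Y X)"
    using assms by (simp add: c_def finite_mats if_distrib[of "\<lambda>x. x * _"] cong: if_cong)
  then show ?thesis
    unfolding left_image_def by blast
qed

lemma ract_in_right_image:
  assumes "b \<in> mats m m"
  shows "ract n m b \<in> (right_image n m :: ('f::{finite,field} fmat \<Rightarrow> 'f fmat \<Rightarrow> 'k::field) set)"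
proof -
  define c :: "'f fmat \<Rightarrow> 'k" where "c b' = (if b' = b then 1 else 0)" for b'
  have "ract n m b = (\<lambda>Y X. \<Sum>b'\<in>mats m m. c b' * ract n m b' Y X)"
    using assms by (simp add: c_def finite_mats if_distrib[of "\<lambda>x. x * _"] cong: if_cong)
  then show ?thesis
    unfolding right_image_def by blast
qed

lemma sum_ract_apply:
  fixes b :: "'f::{finite,field} fmat \<Rightarrow> 'k::field"
  shows "(\<Sum>c\<in>mats m m. b c * ract n m c Y X) =
    (if X \<in> mats n m \<and> Y \<in> mats n m then \<Sum>c\<in>{c \<in> mats m m. mmul m X c = Y}. b c else 0)"
  by (auto simp: ract_def sum.inter_filter finite_mats if_distrib[of "\<lambda>x. _ * x"] cong: if_cong)

definition mtranspose :: "'a fmat \<Rightarrow> 'a fmat" where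
  "mtranspose A = (\<lambda>i j. A j i)"

lemma mtranspose_mtranspose [simp]: "mtranspose (mtranspose A) = A"
  by (simp add: mtranspose_def)

lemma mtranspose_in_mats_iff [simp]: "mtranspose A \<in> mats c r \<longleftrightarrow> A \<in> mats r c"
  by (auto simp: mtranspose_def mats_def)

lemma mtranspose_mmul: "mtranspose (mmul l A B) = mmul l (mtranspose B) (mtranspose (A :: 'a::comm_semiring_0 fmat))"
  by (simp add: mtranspose_def mmul_def mult.commute)

lemma bij_betw_mtranspose: "bij_betw mtranspose (mats r c) (mats c r)"
  by (rule bij_betw_byWitness[where f' = mtranspose]) auto

definition transpose_endo :: "('a fmat \<Rightarrow> 'a fmat \<Rightarrow> 'k) \<Rightarrow> 'a fmat \<Rightarrow> 'a fmat \<Rightarrow> 'k" where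
  "transpose_endo E = (\<lambda>Y X. E (mtranspose Y) (mtranspose X))"

lemma transpose_endo_transpose_endo [simp]: "transpose_endo (transpose_endo E) = E"
  by (simp add: transpose_endo_def)

lemma transpose_endo_in_endos: "E \<in> endos n m \<Longrightarrow> transpose_endo E \<in> endos m n"
  by (simp add: endos_def transpose_endo_def)

lemma ecomp_transpose_endo:
  "ecomp m n (transpose_endo E) (transpose_endo G) = transpose_endo (ecomp n m E G)"
  unfolding ecomp_def transpose_endo_def
  by (intro ext) (rule sum.reindex_bij_betw[OF bij_betw_mtranspose])

lemma transpose_endo_ract: "transpose_endo (ract n m b) = lact m n (mtranspose (b :: 'f::field fmat))"
  unfolding transpose_endo_def ract_def lact_def
  by (intro ext) (metis mtranspose_in_mats_iff mtranspose_mmul mtranspose_mtranspose)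

section \<open>Endomorphisms commuting with the left action\<close>

lemma sum_fibres_mult:
  fixes g :: "'a \<Rightarrow> 'c::semiring_0"
  assumes "finite A" "finite B" "f ` A \<subseteq> B"
  shows "(\<Sum>y\<in>B. (\<Sum>x\<in>{x \<in> A. f x = y}. g x) * h y) = (\<Sum>x\<in>A. g x * h (f x))"
proof -
  have "(\<Sum>y\<in>B. (\<Sum>x\<in>{x \<in> A. f x = y}. g x) * h y) = (\<Sum>y\<in>B. \<Sum>x\<in>{x \<in> A. f x = y}. g x * h (f x))"
    by (intro sum.cong refl) (simp add: sum_distrib_right)
  also have "\<dots> = (\<Sum>x\<in>A. g x * h (f x))"
    using assms by (rule sum.group)
  finally show ?thesis .
qed

locale left_equivariant = additive_character \<psi>
  for \<psi> :: "'f::{finite,field} \<Rightarrow> 'k::field_char_0" +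
  fixes n m :: nat and E :: "'f fmat \<Rightarrow> 'f fmat \<Rightarrow> 'k"
  assumes equivariant: "a \<in> mats n n \<Longrightarrow> X \<in> mats n m \<Longrightarrow> Y \<in> mats n m \<Longrightarrow>
    E Y (mmul n a X) = (\<Sum>Z\<in>{Z \<in> mats n m. mmul n a Z = Y}. E Z X)"
begin

definition transform :: "'f fmat \<Rightarrow> 'f fmat \<Rightarrow> 'k" where
  "transform X B = (\<Sum>Y\<in>mats n m. E Y X * \<psi> (mtrace m (mmul n B Y)))"

lemma transform_mmul_left:
  assumes "a \<in> mats n n" "X \<in> mats n m"
  shows "transform (mmul n a X) B = transform X (mmul n B a)"
proof -
  have "transform (mmul n a X) B =
      (\<Sum>Y\<in>mats n m. (\<Sum>Z\<in>{Z \<in> mats n m. mmul n a Z = Y}. E Z X) * \<psi> (mtrace m (mmul n B Y)))"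
    unfolding transform_def using assms by (intro sum.cong refl) (simp add: equivariant)
  also have "\<dots> = (\<Sum>Z\<in>mats n m. E Z X * \<psi> (mtrace m (mmul n B (mmul n a Z))))"
    using assms(1) by (intro sum_fibres_mult) (auto simp: finite_mats mmul_in_mats)
  finally show ?thesis
    by (simp add: transform_def mmul_assoc)
qed

text \<open>If \<open>C G C = C\<close>, then \<open>a = 1 - G C\<close> fixes \<open>X\<close> while \<open>C a = 0\<close>; so no \<open>Z\<close> with \<open>a Z = Y\<close> exists
  unless \<open>C Y = 0\<close>, and equivariance gives \<open>E Y X = E Y (a X) = 0\<close>.\<close>

lemma annihilator_support:
  assumes X: "X \<in> mats n m" and Y: "Y \<in> mats n m" and "E Y X \<noteq> 0"
    and C: "C \<in> mats l n" and CX: "mmul n C X = 0"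
  shows "mmul n C Y = 0"
proof (rule ccontr)
  assume CY: "mmul n C Y \<noteq> 0"
  obtain G where G: "G \<in> mats n l" "mmul l (mmul n C G) C = C"
    using ex_generalized_inverse[OF C] by blast
  define a where "a = mat_id n - mmul l G C"
  have a: "a \<in> mats n n"
    unfolding a_def using G(1) C by (intro diff_in_mats mat_id_in_mats mmul_in_mats)
  have "mmul n a X = X"
    using X CX by (simp add: a_def mmul_diff_left mmul_mat_id_left mmul_assoc)
  have "mmul n C (mmul n a Z) = 0" for Z
    using C G(2) by (simp add: a_def mmul_assoc[symmetric] mmul_diff_right mmul_mat_id_right)
  then have "{Z \<in> mats n m. mmul n a Z = Y} = {}"
    using CY by auto
  have "E Y X = E Y (mmul n a X)"
    using \<open>mmul n a X = X\<close> by simp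
  also have "\<dots> = (\<Sum>Z\<in>{Z \<in> mats n m. mmul n a Z = Y}. E Z X)"
    by (rule equivariant[OF a X Y])
  also have "\<dots> = 0"
    unfolding \<open>{Z \<in> mats n m. mmul n a Z = Y} = {}\<close> by simp
  finally show False
    using \<open>E Y X \<noteq> 0\<close> by simp
qed

lemma transform_cong:
  assumes X: "X \<in> mats n m" and "B \<in> mats m n" "B' \<in> mats m n" and "mmul n B X = mmul n B' X"
  shows "transform X B = transform X B'"
  unfolding transform_def
proof (intro sum.cong refl)
  fix Y :: "'f fmat"
  assume Y: "Y \<in> mats n m"
  have "mmul n B Y = mmul n B' Y" if "E Y X \<noteq> 0"
    using annihilator_support[OF X Y that, where C = "B - B'" and l = m] assms by (simp add: diff_in_mats mmul_diff_left)
  then show "E Y X * \<psi> (mtrace m (mmul n B Y)) = E Y X * \<psi> (mtrace m (mmul n B' Y))"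
    by (cases "E Y X = 0") simp_all
qed

text \<open>For \<open>B G B = B\<close> put \<open>a = G B\<close> and \<open>a' = G B'\<close>: then \<open>a X = a' X'\<close>, \<open>B a = B\<close> and
  \<open>B a' X' = B' X'\<close>, so both sides equal \<open>transform (a X) B\<close>.\<close>

lemma transform_eq_if_mmul_eq:
  assumes X: "X \<in> mats n m" and X': "X' \<in> mats n m" and B: "B \<in> mats m n" and B': "B' \<in> mats m n"
    and eq: "mmul n B X = mmul n B' X'"
  shows "transform X B = transform X' B'"
proof -
  obtain G where G: "G \<in> mats n m" "mmul m (mmul n B G) B = B"
    using ex_generalized_inverse[OF B] by blast
  define a a' where "a = mmul m G B" and "a' = mmul m G B'"
  have a: "a \<in> mats n n" "a' \<in> mats n n"
    unfolding a_def a'_def using G(1) B B' by (simp_all add: mmul_in_mats)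
  have Ba: "mmul n B a = B"
    unfolding a_def using G(2) by (simp add: mmul_assoc)
  have a'_X': "mmul n a' X' = mmul n a X"
    unfolding a_def a'_def using eq by (simp add: mmul_assoc)
  have "mmul n (mmul n B a') X' = mmul n (mmul n B a) X"
    by (simp add: mmul_assoc a'_X')
  then have "mmul n (mmul n B a') X' = mmul n B' X'"
    using Ba eq by simp
  then have "transform X' B' = transform X' (mmul n B a')"
    using transform_cong[OF X' B' mmul_in_mats[OF B a(2)]] by simp
  also have "\<dots> = transform (mmul n a X) B"
    using transform_mmul_left[OF a(2) X'] a'_X' by simp
  also have "\<dots> = transform X B"
    using transform_mmul_left[OF a(1) X] Ba by simp
  finally show ?thesis
    by simp
qed

lemma ex_transform_factorization:
  "\<exists>F. \<forall>B\<in>mats m n. \<forall>X\<in>mats n m. transform X B = F (mmul n B X)"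
proof -
  have "\<exists>F. \<forall>p. p \<in> mats m n \<times> mats n m \<longrightarrow>
      (case p of (B, X) \<Rightarrow> transform X B) = F (case p of (B, X) \<Rightarrow> mmul n B X)"
  proof (rule function_factors_left_gen[THEN iffD1], intro allI impI)
    fix p q :: "'f fmat \<times> 'f fmat"
    assume "p \<in> mats m n \<times> mats n m \<and> q \<in> mats m n \<times> mats n m \<and>
      (case p of (B, X) \<Rightarrow> mmul n B X) = (case q of (B, X) \<Rightarrow> mmul n B X)"
    then show "(case p of (B, X) \<Rightarrow> transform X B) = (case q of (B, X) \<Rightarrow> transform X B)"
      by (cases p, cases q) (simp add: transform_eq_if_mmul_eq)
  qed
  then show ?thesis
    by fastforce
qed

text \<open>Write the function \<open>F\<close> of \<open>B X\<close> given by \<open>transform X B\<close> as a transform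
  \<open>D \<mapsto> \<Sum>\<^sub>c b c \<psi> (tr (D c))\<close> on \<open>m \<times> m\<close> matrices; then \<open>E\<close> and the kernel \<open>\<Sum>\<^sub>c b c [- c]\<close>
  of right multiplication have the same transforms, so they agree.\<close>

lemma ex_right_action_kernel:
  "\<exists>b. \<forall>X\<in>mats n m. \<forall>Y\<in>mats n m. E Y X = (\<Sum>c\<in>{c \<in> mats m m. mmul m X c = Y}. b c)"
proof -
  obtain F where F: "\<And>B X. B \<in> mats m n \<Longrightarrow> X \<in> mats n m \<Longrightarrow> transform X B = F (mmul n B X)"
    using ex_transform_factorization by blast
  obtain b where b: "\<And>D. D \<in> mats m m \<Longrightarrow> (\<Sum>c\<in>mats m m. b c * \<psi> (mtrace m (mmul m D c))) = F D"
    using fourier_surjective by blast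
  have "E Y X = (\<Sum>c\<in>{c \<in> mats m m. mmul m X c = Y}. b c)" if X: "X \<in> mats n m" and Y: "Y \<in> mats n m" for X Y
  proof -
    have "(\<Sum>c\<in>{c \<in> mats m m. mmul m X c = Y}. b c) - E Y X = 0"
    proof (rule fourier_injective[OF _ Y])
      fix B :: "'f fmat"
      assume B: "B \<in> mats m n"
      have "(\<Sum>Y\<in>mats n m. (\<Sum>c\<in>{c \<in> mats m m. mmul m X c = Y}. b c) * \<psi> (mtrace m (mmul n B Y))) =
          (\<Sum>c\<in>mats m m. b c * \<psi> (mtrace m (mmul m (mmul n B X) c)))"
        using X by (subst sum_fibres_mult) (auto simp: finite_mats mmul_in_mats mmul_assoc)
      also have "\<dots> = transform X B"
        using b F B X by (simp add: mmul_in_mats)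
      finally show "(\<Sum>Y\<in>mats n m. ((\<Sum>c\<in>{c \<in> mats m m. mmul m X c = Y}. b c) - E Y X) *
          \<psi> (mtrace m (mmul n B Y))) = 0"
        by (simp add: transform_def left_diff_distrib sum_subtractf)
    qed
    then show ?thesis
      by simp
  qed
  then show ?thesis
    by blast
qed

end

lemma commuting_with_lact_imp_in_right_image:
  fixes E :: "'f::{finite,field} fmat \<Rightarrow> 'f fmat \<Rightarrow> 'k::field_char_0"
  assumes "alg_closed TYPE('k)" "E \<in> endos n m"
    and commute: "\<And>a. a \<in> mats n n \<Longrightarrow> ecomp n m E (lact n m a) = ecomp n m (lact n m a) E"
  shows "E \<in> right_image n m"
proof -
  have "E Y (mmul n a X) = (\<Sum>Z\<in>{Z \<in> mats n m. mmul n a Z = Y}. E Z X)"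
    if "a \<in> mats n n" "X \<in> mats n m" "Y \<in> mats n m" for a X Y
  proof -
    have "ecomp n m E (lact n m a) Y X = ecomp n m (lact n m a) E Y X"
      using commute[OF that(1)] by simp
    then show ?thesis
      using that unfolding lact_eq_basis_endo
      by (simp add: ecomp_basis_endo_left ecomp_basis_endo_right mmul_in_mats)
  qed
  moreover obtain \<psi> :: "'f \<Rightarrow> 'k" where "additive_character \<psi>"
    using ex_additive_character[OF assms(1)] by blast
  ultimately interpret left_equivariant \<psi> n m E
    by (simp add: left_equivariant_def left_equivariant_axioms_def)
  obtain b where b: "\<forall>X\<in>mats n m. \<forall>Y\<in>mats n m. E Y X = (\<Sum>c\<in>{c \<in> mats m m. mmul m X c = Y}. b c)"
    using ex_right_action_kernel by blast
  have "E = (\<lambda>Y X. \<Sum>c\<in>mats m m. b c * ract n m c Y X)"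
    using b assms(2) by (intro ext) (auto simp: sum_ract_apply endos_def)
  then show ?thesis
    unfolding right_image_def by blast
qed

section \<open>The double centralizer property\<close>

lemma transpose_endo_in_right_image_imp_in_left_image:
  fixes E :: "'f::{finite,field} fmat \<Rightarrow> 'f fmat \<Rightarrow> 'k::field"
  assumes "transpose_endo E \<in> right_image m n"
  shows "E \<in> left_image n m"
proof -
  obtain c where c: "transpose_endo E = (\<lambda>Y X. \<Sum>b\<in>mats n n. c b * ract m n b Y X)"
    using assms by (auto simp: right_image_def)
  define c' where "c' a = c (mtranspose a)" for a
  have "E = transpose_endo (transpose_endo E)"
    by simp
  also have "\<dots> = (\<lambda>Y X. \<Sum>b\<in>mats n n. c' (mtranspose b) * transpose_endo (ract m n b) Y X)"
    unfolding c by (simp add: c'_def transpose_endo_def)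
  also have "\<dots> = (\<lambda>Y X. \<Sum>b\<in>mats n n. c' (mtranspose b) * lact n m (mtranspose b) Y X)"
    by (simp add: transpose_endo_ract)
  also have "\<dots> = (\<lambda>Y X. \<Sum>a\<in>mats n n. c' a * lact n m a Y X)"
    by (intro ext) (rule sum.reindex_bij_betw[OF bij_betw_mtranspose])
  finally show ?thesis
    unfolding left_image_def by blast
qed

lemma centralizer_left_image:
  assumes "alg_closed TYPE('k::field_char_0)"
  shows "centralizer n m (left_image n m :: ('f::{finite,field} fmat \<Rightarrow> 'f fmat \<Rightarrow> 'k) set) =
    right_image n m"
proof
  show "centralizer n m (left_image n m) \<subseteq> (right_image n m :: ('f fmat \<Rightarrow> 'f fmat \<Rightarrow> 'k) set)"
  proof
    fix E :: "'f fmat \<Rightarrow> 'f fmat \<Rightarrow> 'k"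
    assume "E \<in> centralizer n m (left_image n m)"
    then have "E \<in> endos n m" "\<And>G. G \<in> left_image n m \<Longrightarrow> ecomp n m E G = ecomp n m G E"
      by (simp_all add: centralizer_def)
    then show "E \<in> right_image n m"
      by (rule commuting_with_lact_imp_in_right_image[OF assms]) (simp add: lact_in_left_image)
  qed
  show "right_image n m \<subseteq> centralizer n m (left_image n m :: ('f fmat \<Rightarrow> 'f fmat \<Rightarrow> 'k) set)"
    by (rule subset_centralizerI[OF right_image_subset_endos]) (rule left_image_right_image_commute[symmetric])
qed

lemma centralizer_right_image:
  assumes "alg_closed TYPE('k::field_char_0)"
  shows "centralizer n m (right_image n m :: ('f::{finite,field} fmat \<Rightarrow> 'f fmat \<Rightarrow> 'k) set) =
    left_image n m"
proof
  show "centralizer n m (right_image n m) \<subseteq> (left_image n m :: ('f fmat \<Rightarrow> 'f fmat \<Rightarrow> 'k) set)"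
  proof
    fix E :: "'f fmat \<Rightarrow> 'f fmat \<Rightarrow> 'k"
    assume "E \<in> centralizer n m (right_image n m)"
    then have E: "E \<in> endos n m" "\<And>G. G \<in> right_image n m \<Longrightarrow> ecomp n m E G = ecomp n m G E"
      by (simp_all add: centralizer_def)
    have "transpose_endo E \<in> right_image m n"
    proof (rule commuting_with_lact_imp_in_right_image[OF assms])
      show "transpose_endo E \<in> endos m n"
        using E(1) by (rule transpose_endo_in_endos)
    next
      fix a :: "'f fmat"
      assume "a \<in> mats m m"
      have comm: "ecomp n m E (ract n m (mtranspose a)) = ecomp n m (ract n m (mtranspose a)) E"
        by (rule E(2)) (simp add: ract_in_right_image \<open>a \<in> mats m m\<close>)
      have lact: "lact m n a = transpose_endo (ract n m (mtranspose a))"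
        by (simp add: transpose_endo_ract)
      show "ecomp m n (transpose_endo E) (lact m n a) = ecomp m n (lact m n a) (transpose_endo E)"
        unfolding lact ecomp_transpose_endo comm ..
    qed
    then show "E \<in> left_image n m"
      by (rule transpose_endo_in_right_image_imp_in_left_image)
  qed
  show "left_image n m \<subseteq> centralizer n m (right_image n m :: ('f fmat \<Rightarrow> 'f fmat \<Rightarrow> 'k) set)"
    by (rule subset_centralizerI[OF left_image_subset_endos]) (rule left_image_right_image_commute)
qed

theorem theorem6p1:
  fixes n m :: nat
  assumes "alg_closed TYPE('k::field_char_0)"
  shows "centralizer n m (left_image n m :: ('f::{finite,field} fmat \<Rightarrow> 'f fmat \<Rightarrow> 'k) set)
           = right_image n m
       \<and> centralizer n m (right_image n m :: ('f fmat \<Rightarrow> 'f fmat \<Rightarrow> 'k) set)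
           = left_image n m"
  using centralizer_left_image[OF assms] centralizer_right_image[OF assms] by blast

end
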